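(* Let $\rho\in(-1,1)$, $\alpha>0$, $\mu>0$, $\Sigma=\begin{pmatrix}1&\rho\\\rho&1\end{pmatrix}$, and $g(t)=\frac1t\inf_{\vec x\ge(1+t,\ \alpha+\mu t)^\top}\vec x^\top\Sigma^{-1}\vec x$ for $t\ge0$. Let $t_0$ denote the unique minimiser of $g$ on $[0,\infty)$, $I$ the essential index set and $K$ the weakly essential index set associated with $\vec b=(1+t_0,\alpha+\mu t_0)^\top$, $\widehat g=g(t_0)$ and $\widetilde g$ as in the context. Then: (i) Suppose ($\mu<1$ and $\alpha<1$), or ($\mu<1$, $\alpha\ge1$, $\mu\le1/\alpha$), or ($\mu\ge1$, $\alpha<1$, $\mu\le1/\alpha$). (i.R1) If $-1<\rho<\frac{\alpha+\mu}2$: $t_0=t_0^{(0)}$, $I=\{1,2\}$, $K=\emptyset$, $\widehat g=g_0(t_0^{(0)})$, $\widetilde g=g_0''(t_0^{(0)})$. (i.R2) If $\rho=\frac{\alpha+\mu}2$: $t_0=t_0^{(0)}=t_0^{(1)}$, $I=\{1\}$, $K=\{2\}$, $\widehat g=g_0(t_0^{(0)})=g_1(t_0^{(1)})=4$, $\widetilde g=g_1''(t_0^{(1)})=2$. (i.R3) If $\frac{\alpha+\mu}2<\rho<1$: $t_0=t_0^{(1)}$, $I=\{1\}$, $K=\emptyset$, $\widehat g=g_1(t_0^{(1)})=4$, $\widetilde g=g_1''(t_0^{(1)})=2$. (ii) Suppose ($\mu\ge1$ and $\alpha\ge1$), or ($\mu<1$, $\alpha\ge1$, $\mu>1/\alpha$),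 or ($\mu\ge1$, $\alpha<1$, $\mu>1/\alpha$). (ii.R1) If $-1<\rho<\frac{\alpha+\mu}{2\alpha\mu}$: $t_0=t_0^{(0)}$, $I=\{1,2\}$, $K=\emptyset$, $\widehat g=g_0(t_0^{(0)})$, $\widetilde g=g_0''(t_0^{(0)})$. (ii.R2) If $\rho=\frac{\alpha+\mu}{2\alpha\mu}$: $t_0=t_0^{(0)}=t_0^{(2)}$, $I=\{2\}$, $K=\{1\}$, $\widehat g=g_0(t_0^{(0)})=g_2(t_0^{(2)})=4\alpha\mu$, $\widetilde g=g_2''(t_0^{(2)})=2\alpha^{-1}\mu^3$. (ii.R3) If $\frac{\alpha+\mu}{2\alpha\mu}<\rho<1$: $t_0=t_0^{(2)}$, $I=\{2\}$, $K=\emptyset$, $\widehat g=g_2(t_0^{(2)})=4\alpha\mu$, $\widetilde g=g_2''(t_0^{(2)})=2\alpha^{-1}\mu^3$.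
   Context: For positive definite $M$ and $\vec b\notin(-\infty,0]^2$, minimising $\vec x^\top M^{-1}\vec x$ over $\vec x\ge\vec b$ has a unique solution $\widetilde{\vec b}$ and a unique non-empty essential index set $I\subseteq\{1,2\}$ with $\widetilde{\vec b}_I=\vec b_I$, $M_{II}^{-1}\vec b_I>0$, and $\widetilde{\vec b}_{I^c}=M_{I^cI}M_{II}^{-1}\vec b_I\ge\vec b_{I^c}$ if $I^c\ne\emptyset$ (here $\vec a_I$, $M_{IJ}$ denote sub-vectors/sub-matrices). The weakly essential index set is $K=\{j\notin I:\Sigma_{jI}\Sigma_{II}^{-1}\vec b_I=b_j\}$ (with $M=\Sigma$). Writing $\vec\alpha=(1,\alpha)^\top$, $\vec\mu=(1,\mu)^\top$, $\widetilde g=2t_0^{-3}\vec\alpha_I^\top\Sigma_{II}^{-1}\vec\alpha_I$. Further $g_0(t)=\frac{1+\alpha^2-2\alpha\rho}{1-\rho^2}\frac1t+\frac{2(1+\alpha\mu-\rho\alpha-\rho\mu)}{1-\rho^2}+\frac{1+\mu^2-2\rho\mu}{1-\rho^2}t$, $g_1(t)=\frac1t(1+t)^2$, $g_2(t)=\frac1t(\alpha+\mu t)^2$, with unique minimisers on $[0,\infty)$ given by $t_0^{(0)}=\sqrt{\frac{1+\alpha^2-2\alpha\rho}{1+\mu^2-2\mu\rho}}$, $t_0^{(1)}=1$, $t_0^{(2)}=\alpha/\mu$. *)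

theory Defs
  imports "HOL-Analysis.Analysis"
begin

definition Sig :: "real \<Rightarrow> real^2^2" where
  "Sig \<rho> = (\<chi> i j. if i = j then 1 else \<rho>)"

definition qf :: "real^2^2 \<Rightarrow> real^2 \<Rightarrow> real" where
  "qf M x = x \<bullet> (matrix_inv M *v x)"

definition feasible :: "real^2 \<Rightarrow> real^2 \<Rightarrow> bool" where
  "feasible b x \<longleftrightarrow> (\<forall>i. b $ i \<le> x $ i)"

definition btilde :: "real^2^2 \<Rightarrow> real^2 \<Rightarrow> real^2" where
  "btilde M b = (THE x. feasible b x \<and> (\<forall>y. feasible b y \<longrightarrow> qf M x \<le> qf M y))"

text \<open>(M_II^{-1} b_I)_i for a nonempty index set I (I = UNIV = {1,2} or a singleton).\<close>
definition subinv :: "real^2^2 \<Rightarrow> 2 set \<Rightarrow> real^2 \<Rightarrow> 2 \<Rightarrow> real" where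
  "subinv M I b i =
     (if I = UNIV then (matrix_inv M *v b) $ i
      else if I = {i} then b $ i / M $ i $ i else 0)"

definition ess_cond :: "real^2^2 \<Rightarrow> real^2 \<Rightarrow> 2 set \<Rightarrow> bool" where
  "ess_cond M b I \<longleftrightarrow> I \<noteq> {} \<and>
     (\<forall>i\<in>I. btilde M b $ i = b $ i \<and> subinv M I b i > 0) \<and>
     (\<forall>j\<in>-I. btilde M b $ j = (\<Sum>k\<in>I. M $ j $ k * subinv M I b k) \<and> btilde M b $ j \<ge> b $ j)"

definition ess :: "real^2^2 \<Rightarrow> real^2 \<Rightarrow> 2 set" where
  "ess M b = (THE I. ess_cond M b I)"

definition weak_ess :: "real^2^2 \<Rightarrow> real^2 \<Rightarrow> 2 set" where
  "weak_ess M b = {j. j \<notin> ess M b \<and> (\<Sum>k\<in>ess M b. M $ j $ k * subinv M (ess M b) b k) = b $ j}"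

definition vec2 :: "real \<Rightarrow> real \<Rightarrow> real^2" where
  "vec2 a c = (\<chi> i. if i = 1 then a else c)"

definition bvec :: "real \<Rightarrow> real \<Rightarrow> real \<Rightarrow> real^2" where
  "bvec \<alpha> \<mu> t = vec2 (1 + t) (\<alpha> + \<mu> * t)"

definition gfun :: "real \<Rightarrow> real \<Rightarrow> real \<Rightarrow> real \<Rightarrow> real" where
  "gfun \<rho> \<alpha> \<mu> t = (1 / t) * Inf {qf (Sig \<rho>) x | x. feasible (bvec \<alpha> \<mu> t) x}"

text \<open>Unique minimiser of g; g(0) = +infinity in the paper, so we minimise over t > 0.\<close>
definition t0 :: "real \<Rightarrow> real \<Rightarrow> real \<Rightarrow> real" where
  "t0 \<rho> \<alpha> \<mu> = (THE t. 0 < t \<and> (\<forall>s>0. gfun \<rho> \<alpha> \<mu> t \<le> gfun \<rho> \<alpha> \<mu> s))"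

definition Iset :: "real \<Rightarrow> real \<Rightarrow> real \<Rightarrow> 2 set" where
  "Iset \<rho> \<alpha> \<mu> = ess (Sig \<rho>) (bvec \<alpha> \<mu> (t0 \<rho> \<alpha> \<mu>))"

definition Kset :: "real \<Rightarrow> real \<Rightarrow> real \<Rightarrow> 2 set" where
  "Kset \<rho> \<alpha> \<mu> = weak_ess (Sig \<rho>) (bvec \<alpha> \<mu> (t0 \<rho> \<alpha> \<mu>))"

definition ghat :: "real \<Rightarrow> real \<Rightarrow> real \<Rightarrow> real" where
  "ghat \<rho> \<alpha> \<mu> = gfun \<rho> \<alpha> \<mu> (t0 \<rho> \<alpha> \<mu>)"

definition gtilde :: "real \<Rightarrow> real \<Rightarrow> real \<Rightarrow> real" where
  "gtilde \<rho> \<alpha> \<mu> =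
     2 / (t0 \<rho> \<alpha> \<mu>) ^ 3 *
     (\<Sum>i\<in>Iset \<rho> \<alpha> \<mu>. vec2 1 \<alpha> $ i * subinv (Sig \<rho>) (Iset \<rho> \<alpha> \<mu>) (vec2 1 \<alpha>) i)"

definition g0 :: "real \<Rightarrow> real \<Rightarrow> real \<Rightarrow> real \<Rightarrow> real" where
  "g0 \<rho> \<alpha> \<mu> t =
     (1 + \<alpha>^2 - 2*\<alpha>*\<rho>) / (1 - \<rho>^2) * (1 / t)
     + 2 * (1 + \<alpha>*\<mu> - \<rho>*\<alpha> - \<rho>*\<mu>) / (1 - \<rho>^2)
     + (1 + \<mu>^2 - 2*\<rho>*\<mu>) / (1 - \<rho>^2) * t"

definition g1 :: "real \<Rightarrow> real" where
  "g1 t = (1 / t) * (1 + t)^2"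

definition g2 :: "real \<Rightarrow> real \<Rightarrow> real \<Rightarrow> real" where
  "g2 \<alpha> \<mu> t = (1 / t) * (\<alpha> + \<mu> * t)^2"

definition t00 :: "real \<Rightarrow> real \<Rightarrow> real \<Rightarrow> real" where
  "t00 \<rho> \<alpha> \<mu> = sqrt ((1 + \<alpha>^2 - 2*\<alpha>*\<rho>) / (1 + \<mu>^2 - 2*\<mu>*\<rho>))"

definition t01 :: real where "t01 = 1"

definition t02 :: "real \<Rightarrow> real \<Rightarrow> real" where
  "t02 \<alpha> \<mu> = \<alpha> / \<mu>"

end

theory Submission imports Defs begin

text \<open>In two dimensions, for \<open>x = (a, c)\<close> and \<open>|\<rho>| < 1\<close>,
  \<open>x\<^sup>T\<Sigma>\<^sup>-\<^sup>1x = (a\<^sup>2 - 2\<rho>ac + c\<^sup>2) / (1 - \<rho>\<^sup>2) = c\<^sup>2 + (a - \<rho>c)\<^sup>2 / (1 - \<rho>\<^sup>2)\<close>.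
  So if \<open>0 \<le> b\<^sub>i\<close> and \<open>b\<^sub>j \<le> \<rho> b\<^sub>i\<close>, the bound \<open>x\<^sup>T\<Sigma>\<^sup>-\<^sup>1x \<ge> x\<^sub>i\<^sup>2 \<ge> b\<^sub>i\<^sup>2\<close> is attained on
  \<open>x \<ge> b\<close> only at \<open>x\<^sub>i = b\<^sub>i, x\<^sub>j = \<rho> b\<^sub>i\<close>, and \<open>I = {i}\<close>; if instead \<open>\<Sigma>\<^sup>-\<^sup>1b > 0\<close>, expanding
  the form around \<open>b\<close> shows that \<open>b\<close> itself is the strict minimiser, and \<open>I = {1, 2}\<close>.

  Along \<open>b(t) = (1 + t, \<alpha> + \<mu>t)\<close> the bound \<open>x\<^sup>T\<Sigma>\<^sup>-\<^sup>1x \<ge> x\<^sub>i\<^sup>2\<close> gives \<open>g \<ge> g\<^sub>1\<close> and \<open>g \<ge> g\<^sub>2\<close> everywhere,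
  with equality at \<open>t = 1\<close> when \<open>\<rho> \<ge> (\<alpha> + \<mu>)/2\<close> and at \<open>t = \<alpha>/\<mu>\<close> when
  \<open>\<rho> \<ge> (\<alpha> + \<mu>)/(2\<alpha>\<mu>)\<close>; these points minimise \<open>g\<^sub>1\<close> and \<open>g\<^sub>2\<close> strictly. Below both
  thresholds, \<open>\<Sigma>\<^sup>-\<^sup>1b(t\<^sub>0\<^sup>(\<^sup>0\<^sup>)) > 0\<close>, so \<open>g = g\<^sub>0\<close> at \<open>t\<^sub>0\<^sup>(\<^sup>0\<^sup>)\<close>, and the expansion around
  \<open>b(t\<^sub>0\<^sup>(\<^sup>0\<^sup>))\<close> together with the stationarity of \<open>g\<^sub>0\<close> there gives \<open>g(s) > g\<^sub>0(t\<^sub>0\<^sup>(\<^sup>0\<^sup>))\<close>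
  for every other \<open>s\<close>. Hypothesis (i) forces \<open>\<alpha>\<mu> \<le> 1\<close> and (ii) forces \<open>\<alpha>\<mu> \<ge> 1\<close>, which
  decides which threshold comes first.\<close>

lemma UNIV_2_pair:
  fixes i j :: 2
  assumes "i \<noteq> j"
  shows "UNIV = {i, j}"
  using assms exhaust_2[of i] exhaust_2[of j] by (auto simp: UNIV_2)

lemma singleton_ne_UNIV_2: "{i :: 2} \<noteq> UNIV"
proof
  assume "{i} = UNIV"
  then have "1 = i" "2 = i" by auto
  then show False by simp
qed

lemma Compl_singleton_2:
  fixes i j :: 2
  assumes "i \<noteq> j"
  shows "- {i} = {j}"
  using UNIV_2_pair[OF assms] assms by auto

lemma subset_2_cases:
  fixes i j :: 2 and J :: "2 set"
  assumes "i \<noteq> j"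
  shows "J = {} \<or> J = {i} \<or> J = {j} \<or> J = UNIV"
proof -
  have "J \<in> Pow {i, j}" by (simp add: UNIV_2_pair[OF assms, symmetric])
  then show ?thesis by (auto simp: Pow_insert UNIV_2_pair[OF assms])
qed

lemma all_2_iff:
  fixes i j :: 2
  assumes "i \<noteq> j"
  shows "(\<forall>k. P k) \<longleftrightarrow> P i \<and> P j"
  using UNIV_2_pair[OF assms] by (metis UNIV_I insertE singletonD)

lemma sum_UNIV_2:
  fixes i j :: 2
  assumes "i \<noteq> j"
  shows "sum f UNIV = f i + f j"
  using assms by (simp add: UNIV_2_pair[OF assms])

lemma vec_eq_2:
  fixes i j :: 2
  assumes "i \<noteq> j"
  shows "x = y \<longleftrightarrow> x $ i = y $ i \<and> x $ j = y $ j"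
  by (simp add: vec_eq_iff all_2_iff[OF assms])

lemma feasible_2:
  fixes i j :: 2
  assumes "i \<noteq> j"
  shows "feasible b x \<longleftrightarrow> b $ i \<le> x $ i \<and> b $ j \<le> x $ j"
  by (simp add: feasible_def all_2_iff[OF assms])

lemma Sig_nth [simp]: "Sig \<rho> $ i $ i = 1" "i \<noteq> j \<Longrightarrow> Sig \<rho> $ i $ j = \<rho>"
  by (simp_all add: Sig_def)

lemma one_minus_sq_pos:
  fixes \<rho> :: real
  assumes "-1 < \<rho>" "\<rho> < 1"
  shows "0 < 1 - \<rho>\<^sup>2"
  using assms by (simp add: abs_square_less_1)

lemma matrix_inv_Sig:
  assumes "-1 < \<rho>" "\<rho> < 1"
  shows "matrix_inv (Sig \<rho>) = (\<chi> i j. (if i = j then 1 else - \<rho>) / (1 - \<rho>\<^sup>2))"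
    (is "_ = ?S")
proof -
  have D: "1 - \<rho>\<^sup>2 \<noteq> 0" using one_minus_sq_pos[OF assms] by simp
  have inv: "Sig \<rho> ** ?S = mat 1" "?S ** Sig \<rho> = mat 1"
    using D by (auto simp: vec_eq_iff forall_2 matrix_matrix_mult_def Sig_def mat_def sum_2
        add_divide_distrib[symmetric] power2_eq_square)
  then have "\<exists>S'. Sig \<rho> ** S' = mat 1 \<and> S' ** Sig \<rho> = mat 1" by blast
  then have left_inv: "matrix_inv (Sig \<rho>) ** Sig \<rho> = mat 1"
    unfolding matrix_inv_def by (rule conjunct2[OF someI_ex])
  have "matrix_inv (Sig \<rho>) = matrix_inv (Sig \<rho>) ** (Sig \<rho> ** ?S)"
    using inv by simp
  also have "\<dots> = ?S"
    by (simp add: matrix_mul_assoc left_inv)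
  finally show ?thesis .
qed

lemma matrix_inv_Sig_mult:
  fixes i j :: 2
  assumes "-1 < \<rho>" "\<rho> < 1" "i \<noteq> j"
  shows "(matrix_inv (Sig \<rho>) *v x) $ i = (x $ i - \<rho> * x $ j) / (1 - \<rho>\<^sup>2)"
  using assms by (simp add: matrix_inv_Sig matrix_vector_mult_def sum_UNIV_2[OF assms(3)]
      diff_divide_distrib)

definition qform :: "real \<Rightarrow> real \<Rightarrow> real \<Rightarrow> real" where
  "qform \<rho> a c = (a\<^sup>2 - 2 * \<rho> * a * c + c\<^sup>2) / (1 - \<rho>\<^sup>2)"

lemma qform_commute: "qform \<rho> a c = qform \<rho> c a"
  by (simp add: qform_def algebra_simps)

lemma qf_Sig:
  fixes i j :: 2
  assumes "-1 < \<rho>" "\<rho> < 1" "i \<noteq> j"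
  shows "qf (Sig \<rho>) x = qform \<rho> (x $ i) (x $ j)"
proof -
  have "qf (Sig \<rho>) x = x $ i * (matrix_inv (Sig \<rho>) *v x) $ i + x $ j * (matrix_inv (Sig \<rho>) *v x) $ j"
    by (simp add: qf_def inner_vec_def sum_UNIV_2[OF assms(3)])
  then show ?thesis
    using assms
    by (simp add: matrix_inv_Sig_mult[OF assms] matrix_inv_Sig_mult[OF assms(1,2) not_sym[OF assms(3)]]
        qform_def add_divide_distrib[symmetric] power2_eq_square algebra_simps)
qed

lemma qform_eq_sq_plus:
  assumes "-1 < \<rho>" "\<rho> < 1"
  shows "qform \<rho> a c = c\<^sup>2 + (a - \<rho> * c)\<^sup>2 / (1 - \<rho>\<^sup>2)"
  using one_minus_sq_pos[OF assms] by (simp add: qform_def field_simps power2_eq_square)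

lemma qform_ge_sq:
  assumes "-1 < \<rho>" "\<rho> < 1"
  shows "c\<^sup>2 \<le> qform \<rho> a c"
  using qform_eq_sq_plus[OF assms] one_minus_sq_pos[OF assms] by simp

lemma qform_pos:
  assumes "-1 < \<rho>" "\<rho> < 1" "a \<noteq> 0 \<or> c \<noteq> 0"
  shows "0 < qform \<rho> a c"
proof (cases "c = 0")
  case True
  then show ?thesis
    using assms qform_eq_sq_plus[OF assms(1,2)] one_minus_sq_pos[OF assms(1,2)] by simp
next
  case False
  then show ?thesis
    using qform_eq_sq_plus[OF assms(1,2)] one_minus_sq_pos[OF assms(1,2)]
    by (simp add: add_pos_nonneg)
qed

lemma qform_add:
  "qform \<rho> (a + a') (c + c') =
     qform \<rho> a c + 2 * ((a - \<rho> * c) * a' + (c - \<rho> * a) * c') / (1 - \<rho>\<^sup>2) + qform \<rho> a' c'"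
  unfolding qform_def add_divide_distrib[symmetric]
  by (rule arg_cong[where f="\<lambda>x. x / _"]) (simp add: algebra_simps power2_eq_square)

definition strict_minimiser :: "real^2^2 \<Rightarrow> real^2 \<Rightarrow> real^2 \<Rightarrow> bool" where
  "strict_minimiser M b x \<longleftrightarrow> feasible b x \<and> (\<forall>y. feasible b y \<longrightarrow> y \<noteq> x \<longrightarrow> qf M x < qf M y)"

lemma strict_minimiser_le:
  assumes "strict_minimiser M b x" "feasible b y"
  shows "qf M x \<le> qf M y"
  using assms unfolding strict_minimiser_def by (cases "y = x") (auto intro: less_imp_le)

lemma btilde_eq:
  assumes "strict_minimiser M b x"
  shows "btilde M b = x"
  unfolding btilde_def
proof (rule the_equality)
  show "feasible b x \<and> (\<forall>y. feasible b y \<longrightarrow> qf M x \<le> qf M y)"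
    using assms strict_minimiser_le by (auto simp: strict_minimiser_def)
  show "x' = x" if x': "feasible b x' \<and> (\<forall>y. feasible b y \<longrightarrow> qf M x' \<le> qf M y)" for x'
  proof (rule ccontr)
    assume "x' \<noteq> x"
    then have "qf M x < qf M x'" using x' assms by (simp add: strict_minimiser_def)
    moreover have "qf M x' \<le> qf M x" using x' assms by (simp add: strict_minimiser_def)
    ultimately show False by simp
  qed
qed

lemma Inf_qf_feasible_eq:
  assumes "strict_minimiser M b x"
  shows "Inf {qf M y | y. feasible b y} = qf M x"
  using assms strict_minimiser_le[OF assms]
  by (intro cInf_eq_minimum) (auto simp: strict_minimiser_def)

lemma strict_minimiser_interior:
  assumes r: "-1 < \<rho>" "\<rho> < 1" and pos: "\<And>i. 0 < (matrix_inv (Sig \<rho>) *v b) $ i"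
  shows "strict_minimiser (Sig \<rho>) b b"
proof -
  have D: "0 < 1 - \<rho>\<^sup>2" by (rule one_minus_sq_pos[OF r])
  have v: "0 < b $ 1 - \<rho> * b $ 2" "0 < b $ 2 - \<rho> * b $ 1"
    using pos[of 1] pos[of 2] D
    by (simp_all add: matrix_inv_Sig_mult[OF r, where i=1 and j=2]
        matrix_inv_Sig_mult[OF r, where i=2 and j=1] zero_less_divide_iff)
  have "qf (Sig \<rho>) b < qf (Sig \<rho>) y" if y: "feasible b y" "y \<noteq> b" for y
  proof -
    define w1 w2 where "w1 = y $ 1 - b $ 1" and "w2 = y $ 2 - b $ 2"
    have w: "0 \<le> w1" "0 \<le> w2" "w1 \<noteq> 0 \<or> w2 \<noteq> 0"
      using y by (auto simp: feasible_2[of 1 2] vec_eq_2[of 1 2] w1_def w2_def)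
    have "0 \<le> 2 * ((b $ 1 - \<rho> * b $ 2) * w1 + (b $ 2 - \<rho> * b $ 1) * w2) / (1 - \<rho>\<^sup>2)"
      using v w D by simp
    moreover have "0 < qform \<rho> w1 w2" using qform_pos[OF r] w by blast
    ultimately have "qform \<rho> (b $ 1) (b $ 2) < qform \<rho> (b $ 1 + w1) (b $ 2 + w2)"
      unfolding qform_add by linarith
    then show ?thesis by (simp add: qf_Sig[OF r, where i=1 and j=2] w1_def w2_def)
  qed
  then show ?thesis by (simp add: strict_minimiser_def feasible_def)
qed

text \<open>The solution \<open>x\<^sub>i = b\<^sub>i\<close>, \<open>x\<^sub>j = \<Sigma>\<^sub>j\<^sub>i \<Sigma>\<^sub>i\<^sub>i\<^sup>-\<^sup>1 b\<^sub>i\<close> for \<open>I = {i}\<close>.\<close>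
definition face_point :: "real \<Rightarrow> 2 \<Rightarrow> real^2 \<Rightarrow> real^2" where
  "face_point \<rho> i b = (\<chi> k. if k = i then b $ i else \<rho> * b $ i)"

lemma face_point_nth [simp]:
  "face_point \<rho> i b $ i = b $ i" "k \<noteq> i \<Longrightarrow> face_point \<rho> i b $ k = \<rho> * b $ i"
  by (simp_all add: face_point_def)

lemma qf_face_point:
  assumes r: "-1 < \<rho>" "\<rho> < 1"
  shows "qf (Sig \<rho>) (face_point \<rho> i b) = (b $ i)\<^sup>2"
proof -
  define j :: 2 where "j = (if i = 1 then 2 else 1)"
  have ij: "i \<noteq> j" by (simp add: j_def)
  show ?thesis
    using ij by (simp add: qf_Sig[OF r not_sym[OF ij]] qform_eq_sq_plus[OF r])
qed

lemma strict_minimiser_face: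
  assumes r: "-1 < \<rho>" "\<rho> < 1" and ij: "i \<noteq> j" and b: "0 \<le> b $ i" "b $ j \<le> \<rho> * b $ i"
  shows "strict_minimiser (Sig \<rho>) b (face_point \<rho> i b)"
proof -
  have D: "0 < 1 - \<rho>\<^sup>2" by (rule one_minus_sq_pos[OF r])
  have "(b $ i)\<^sup>2 < qf (Sig \<rho>) y" if y: "feasible b y" "y \<noteq> face_point \<rho> i b" for y
  proof -
    have yi: "b $ i \<le> y $ i" using y(1) by (simp add: feasible_2[OF ij])
    have split: "qf (Sig \<rho>) y = (y $ i)\<^sup>2 + (y $ j - \<rho> * y $ i)\<^sup>2 / (1 - \<rho>\<^sup>2)"
      by (simp add: qf_Sig[OF r not_sym[OF ij]] qform_eq_sq_plus[OF r])
    show ?thesis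
    proof (cases "y $ i = b $ i")
      case True
      then have "y $ j \<noteq> \<rho> * y $ i" using y(2) ij by (simp add: vec_eq_2[OF ij])
      then show ?thesis using split True D by simp
    next
      case False
      then have "(b $ i)\<^sup>2 < (y $ i)\<^sup>2" using yi b(1) by (simp add: power_strict_mono)
      moreover have "0 \<le> (y $ j - \<rho> * y $ i)\<^sup>2 / (1 - \<rho>\<^sup>2)" using D by simp
      ultimately show ?thesis using split by linarith
    qed
  qed
  moreover have "feasible b (face_point \<rho> i b)"
    using b ij by (simp add: feasible_2[OF ij])
  ultimately show ?thesis by (simp add: strict_minimiser_def qf_face_point[OF r])
qed

lemma ess_eqI:
  assumes "ess_cond M b I" "\<And>J. ess_cond M b J \<Longrightarrow> J = I"
  shows "ess M b = I"
  unfolding ess_def using assms by (rule the_equality)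

lemma ess_cond_UNIV:
  "ess_cond M b UNIV \<longleftrightarrow> (\<forall>i. btilde M b $ i = b $ i \<and> 0 < (matrix_inv M *v b) $ i)"
  by (simp add: ess_cond_def subinv_def)

lemma subinv_singleton: "subinv M {i} b i = b $ i / M $ i $ i"
  by (simp add: subinv_def singleton_ne_UNIV_2)

lemma ess_cond_singleton:
  assumes ij: "i \<noteq> j"
  shows "ess_cond M b {i} \<longleftrightarrow>
    btilde M b $ i = b $ i \<and> 0 < b $ i / M $ i $ i \<and>
    btilde M b $ j = M $ j $ i * (b $ i / M $ i $ i) \<and> b $ j \<le> btilde M b $ j"
  by (simp add: ess_cond_def Compl_singleton_2[OF ij] subinv_singleton)

lemma weak_ess_UNIV: "ess M b = UNIV \<Longrightarrow> weak_ess M b = {}"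
  by (simp add: weak_ess_def)

lemma weak_ess_singleton:
  assumes ij: "i \<noteq> j" and I: "ess M b = {i}"
  shows "weak_ess M b = (if M $ j $ i * (b $ i / M $ i $ i) = b $ j then {j} else {})"
  using UNIV_2_pair[OF ij] ij by (auto simp: weak_ess_def I subinv_singleton)

lemma ess_Sig_interior:
  assumes r: "-1 < \<rho>" "\<rho> < 1" and pos: "\<And>i. 0 < (matrix_inv (Sig \<rho>) *v b) $ i"
  shows "ess (Sig \<rho>) b = UNIV"
proof (rule ess_eqI)
  have bt: "btilde (Sig \<rho>) b = b" by (rule btilde_eq[OF strict_minimiser_interior[OF r pos]])
  then show "ess_cond (Sig \<rho>) b UNIV" using pos by (simp add: ess_cond_UNIV)
  have not_face: "\<not> ess_cond (Sig \<rho>) b {i}" if ij: "i \<noteq> j" for i j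
  proof
    assume "ess_cond (Sig \<rho>) b {i}"
    then have "b $ j - \<rho> * b $ i = 0" using ij by (simp add: ess_cond_singleton[OF ij] bt)
    then show False using pos[of j] by (simp add: matrix_inv_Sig_mult[OF r not_sym[OF ij]])
  qed
  fix J assume J: "ess_cond (Sig \<rho>) b J"
  then have "J \<noteq> {}" by (simp add: ess_cond_def)
  then show "J = UNIV"
    using subset_2_cases[of 1 2 J] J not_face[of 1 2] not_face[of 2 1] by auto
qed

lemma ess_Sig_face:
  assumes r: "-1 < \<rho>" "\<rho> < 1" and ij: "i \<noteq> j" and b: "0 < b $ i" "b $ j \<le> \<rho> * b $ i"
  shows "ess (Sig \<rho>) b = {i}"
proof (rule ess_eqI)
  have D: "0 < 1 - \<rho>\<^sup>2" by (rule one_minus_sq_pos[OF r])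
  have bt: "btilde (Sig \<rho>) b = face_point \<rho> i b"
    using b by (intro btilde_eq strict_minimiser_face[OF r ij]) auto
  show "ess_cond (Sig \<rho>) b {i}"
    using b ij by (simp add: ess_cond_singleton[OF ij] bt)
  have "\<not> ess_cond (Sig \<rho>) b {j}"
  proof
    assume "ess_cond (Sig \<rho>) b {j}"
    then have "btilde (Sig \<rho>) b $ j = b $ j"
      and "btilde (Sig \<rho>) b $ i = Sig \<rho> $ i $ j * (b $ j / Sig \<rho> $ j $ j)"
      by (simp_all add: ess_cond_singleton[OF not_sym[OF ij]])
    then have "\<rho> * b $ i = b $ j" "b $ i = \<rho> * b $ j" using ij by (simp_all add: bt)
    then have "(1 - \<rho>\<^sup>2) * b $ i = 0" by (simp add: power2_eq_square algebra_simps)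
    then show False using D b(1) by simp
  qed
  moreover have "\<not> ess_cond (Sig \<rho>) b UNIV"
  proof
    assume "ess_cond (Sig \<rho>) b UNIV"
    then have "0 < (matrix_inv (Sig \<rho>) *v b) $ j" by (simp add: ess_cond_UNIV)
    then show False using b D by (simp add: matrix_inv_Sig_mult[OF r not_sym[OF ij]] zero_less_divide_iff)
  qed
  moreover fix J assume J: "ess_cond (Sig \<rho>) b J"
  moreover have "J \<noteq> {}" using J by (simp add: ess_cond_def)
  ultimately show "J = {i}"
    using subset_2_cases[OF ij, of J] by auto
qed

lemma vec2_nth [simp]: "vec2 a c $ 1 = a" "vec2 a c $ 2 = c"
  by (simp_all add: vec2_def)

lemma bvec_nth [simp]: "bvec \<alpha> \<mu> t $ 1 = 1 + t" "bvec \<alpha> \<mu> t $ 2 = \<alpha> + \<mu> * t"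
  by (simp_all add: bvec_def)

lemma gfun_eq:
  assumes "strict_minimiser (Sig \<rho>) (bvec \<alpha> \<mu> t) x"
  shows "gfun \<rho> \<alpha> \<mu> t = qf (Sig \<rho>) x / t"
  by (simp add: gfun_def Inf_qf_feasible_eq[OF assms])

lemma gfun_lower_bound:
  assumes "0 < t" "\<And>x. feasible (bvec \<alpha> \<mu> t) x \<Longrightarrow> L \<le> qf (Sig \<rho>) x"
  shows "L / t \<le> gfun \<rho> \<alpha> \<mu> t"
proof -
  have "feasible (bvec \<alpha> \<mu> t) (bvec \<alpha> \<mu> t)" by (simp add: feasible_def)
  then have "L \<le> Inf {qf (Sig \<rho>) x | x. feasible (bvec \<alpha> \<mu> t) x}"
    using assms(2) by (intro cInf_greatest) auto
  then show ?thesis using assms(1) by (simp add: gfun_def divide_right_mono)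
qed

lemma gfun_ge_g1:
  assumes r: "-1 < \<rho>" "\<rho> < 1" and t: "0 < t"
  shows "g1 t \<le> gfun \<rho> \<alpha> \<mu> t"
proof -
  have "(1 + t)\<^sup>2 \<le> qf (Sig \<rho>) x" if "feasible (bvec \<alpha> \<mu> t) x" for x
  proof -
    have "(1 + t)\<^sup>2 \<le> (x $ 1)\<^sup>2" using that t by (intro power_mono) (auto simp: feasible_2[where i=1 and j=2])
    also have "\<dots> \<le> qf (Sig \<rho>) x" by (simp add: qf_Sig[OF r, where i=2 and j=1] qform_ge_sq[OF r])
    finally show ?thesis .
  qed
  then show ?thesis using gfun_lower_bound[OF t] by (simp add: g1_def)
qed

lemma gfun_ge_g2:
  assumes r: "-1 < \<rho>" "\<rho> < 1" and t: "0 < t" and b: "0 \<le> \<alpha> + \<mu> * t"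
  shows "g2 \<alpha> \<mu> t \<le> gfun \<rho> \<alpha> \<mu> t"
proof -
  have "(\<alpha> + \<mu> * t)\<^sup>2 \<le> qf (Sig \<rho>) x" if "feasible (bvec \<alpha> \<mu> t) x" for x
  proof -
    have "(\<alpha> + \<mu> * t)\<^sup>2 \<le> (x $ 2)\<^sup>2" using that b by (intro power_mono) (auto simp: feasible_2[where i=1 and j=2])
    also have "\<dots> \<le> qf (Sig \<rho>) x" by (simp add: qf_Sig[OF r, where i=1 and j=2] qform_ge_sq[OF r])
    finally show ?thesis .
  qed
  then show ?thesis using gfun_lower_bound[OF t] by (simp add: g2_def)
qed

lemma g1_gt_4:
  assumes "0 < t" "t \<noteq> 1"
  shows "4 < g1 t"
proof -
  have "0 < (1 - t)\<^sup>2" using assms by simp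
  then have "4 * t < (1 + t)\<^sup>2" by (simp add: power2_eq_square algebra_simps)
  then show ?thesis using assms by (simp add: g1_def field_simps)
qed

lemma g2_gt_4_mult:
  assumes "0 < \<alpha>" "0 < \<mu>" "0 < t" "t \<noteq> \<alpha> / \<mu>"
  shows "4 * \<alpha> * \<mu> < g2 \<alpha> \<mu> t"
proof -
  have "\<alpha> - \<mu> * t \<noteq> 0" using assms by (auto simp: field_simps)
  then have "0 < (\<alpha> - \<mu> * t)\<^sup>2" by simp
  then have "4 * \<alpha> * \<mu> * t < (\<alpha> + \<mu> * t)\<^sup>2" by (simp add: power2_eq_square algebra_simps)
  then show ?thesis using assms by (simp add: g2_def field_simps)
qed

lemma t0_eqI:
  assumes "0 < T" "\<And>s. 0 < s \<Longrightarrow> s \<noteq> T \<Longrightarrow> gfun \<rho> \<alpha> \<mu> T < gfun \<rho> \<alpha> \<mu> s"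
  shows "t0 \<rho> \<alpha> \<mu> = T"
  unfolding t0_def
proof (rule the_equality)
  show "0 < T \<and> (\<forall>s>0. gfun \<rho> \<alpha> \<mu> T \<le> gfun \<rho> \<alpha> \<mu> s)"
    using assms by (metis order.strict_implies_order order_refl)
  show "t = T" if "0 < t \<and> (\<forall>s>0. gfun \<rho> \<alpha> \<mu> t \<le> gfun \<rho> \<alpha> \<mu> s)" for t
    using that assms by (meson not_le)
qed

lemma case_I_eq_1:
  assumes r: "-1 < \<rho>" "\<rho> < 1" and "0 < \<alpha>" "0 < \<mu>" and \<rho>: "(\<alpha> + \<mu>) / 2 \<le> \<rho>"
  shows "t0 \<rho> \<alpha> \<mu> = 1 \<and> ghat \<rho> \<alpha> \<mu> = 4 \<and> Iset \<rho> \<alpha> \<mu> = {1} \<and>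
    Kset \<rho> \<alpha> \<mu> = (if \<rho> = (\<alpha> + \<mu>) / 2 then {2} else {}) \<and> gtilde \<rho> \<alpha> \<mu> = 2"
proof -
  let ?b = "bvec \<alpha> \<mu> 1"
  have face: "0 < ?b $ 1" "?b $ 2 \<le> \<rho> * ?b $ 1" using \<rho> by simp_all
  have g_1: "gfun \<rho> \<alpha> \<mu> 1 = 4"
    using gfun_eq[OF strict_minimiser_face[OF r _ less_imp_le[OF face(1)] face(2)]]
    by (simp add: qf_face_point[OF r])
  have t0: "t0 \<rho> \<alpha> \<mu> = 1"
  proof (rule t0_eqI)
    show "gfun \<rho> \<alpha> \<mu> 1 < gfun \<rho> \<alpha> \<mu> s" if "0 < s" "s \<noteq> 1" for s
      using g1_gt_4[OF that] gfun_ge_g1[OF r \<open>0 < s\<close>, of \<alpha> \<mu>] g_1 by linarith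
  qed simp
  have I: "Iset \<rho> \<alpha> \<mu> = {1}" by (simp add: Iset_def t0 ess_Sig_face[OF r _ face])
  have K: "Kset \<rho> \<alpha> \<mu> = (if \<rho> = (\<alpha> + \<mu>) / 2 then {2} else {})"
    using I by (auto simp: Kset_def Iset_def t0 weak_ess_singleton[where i=1 and j=2])
  show ?thesis
    using t0 I K g_1 by (simp add: ghat_def gtilde_def subinv_singleton)
qed

lemma case_I_eq_2:
  assumes r: "-1 < \<rho>" "\<rho> < 1" and a: "0 < \<alpha>" "0 < \<mu>" and \<rho>: "(\<alpha> + \<mu>) / (2 * \<alpha> * \<mu>) \<le> \<rho>"
  shows "t0 \<rho> \<alpha> \<mu> = \<alpha> / \<mu> \<and> ghat \<rho> \<alpha> \<mu> = 4 * \<alpha> * \<mu> \<and> Iset \<rho> \<alpha> \<mu> = {2} \<and>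
    Kset \<rho> \<alpha> \<mu> = (if \<rho> = (\<alpha> + \<mu>) / (2 * \<alpha> * \<mu>) then {1} else {}) \<and>
    gtilde \<rho> \<alpha> \<mu> = 2 * \<mu> ^ 3 / \<alpha>"
proof -
  define T where "T = \<alpha> / \<mu>"
  let ?b = "bvec \<alpha> \<mu> T"
  have T_pos: "0 < T" and b_T: "?b $ 2 = 2 * \<alpha>" using a by (simp_all add: T_def)
  have bound_iff: "?b $ 1 \<le> \<rho> * ?b $ 2 \<longleftrightarrow> (\<alpha> + \<mu>) / (2 * \<alpha> * \<mu>) \<le> \<rho>"
    and eq_iff: "\<rho> * ?b $ 2 = ?b $ 1 \<longleftrightarrow> \<rho> = (\<alpha> + \<mu>) / (2 * \<alpha> * \<mu>)"
    using a by (simp_all add: T_def field_simps)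
  have face: "0 < ?b $ 2" "?b $ 1 \<le> \<rho> * ?b $ 2" using a \<rho> b_T bound_iff by simp_all
  have g_T: "gfun \<rho> \<alpha> \<mu> T = 4 * \<alpha> * \<mu>"
    using gfun_eq[OF strict_minimiser_face[OF r _ less_imp_le[OF face(1)] face(2)]] a
    by (simp add: qf_face_point[OF r] T_def power2_eq_square)
  have t0: "t0 \<rho> \<alpha> \<mu> = T"
  proof (rule t0_eqI[OF T_pos])
    show "gfun \<rho> \<alpha> \<mu> T < gfun \<rho> \<alpha> \<mu> s" if "0 < s" "s \<noteq> T" for s
      using g2_gt_4_mult[OF a that(1)] gfun_ge_g2[OF r that(1), of \<alpha> \<mu>] g_T that a
      by (simp add: T_def)
  qed
  have I: "Iset \<rho> \<alpha> \<mu> = {2}" by (simp add: Iset_def t0 ess_Sig_face[OF r _ face])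
  have K: "Kset \<rho> \<alpha> \<mu> = (if \<rho> = (\<alpha> + \<mu>) / (2 * \<alpha> * \<mu>) then {1} else {})"
    using I eq_iff by (auto simp: Kset_def Iset_def t0 weak_ess_singleton[where i=2 and j=1])
  have "gtilde \<rho> \<alpha> \<mu> = 2 * \<mu> ^ 3 / \<alpha>"
    using a by (simp add: gtilde_def I t0 T_def subinv_singleton power3_eq_cube field_simps)
  then show ?thesis using t0 I K g_T by (simp add: ghat_def T_def)
qed

lemma neg_mult_sqrt_less:
  fixes D x y \<nu> \<kappa> :: real
  assumes "0 < D" "0 < \<nu>" "0 < \<kappa>" "x < 0" "0 < \<kappa> * x + \<nu> * y"
  shows "- x * sqrt (D * \<kappa>\<^sup>2 + y\<^sup>2) < y * sqrt (D * \<nu>\<^sup>2 + x\<^sup>2)"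
proof -
  have kx: "\<kappa> * x < 0" using assms by (simp add: mult_pos_neg)
  then have "0 < \<nu> * y" using assms by linarith
  then have y: "0 < y" using assms by (simp add: zero_less_mult_iff)
  have "(\<kappa> * - x)\<^sup>2 < (\<nu> * y)\<^sup>2"
    using assms kx by (intro power_strict_mono) auto
  then have "D * (\<kappa>\<^sup>2 * x\<^sup>2) < D * (\<nu>\<^sup>2 * y\<^sup>2)"
    using assms by (simp add: power_mult_distrib)
  then have "x\<^sup>2 * (D * \<kappa>\<^sup>2 + y\<^sup>2) < y\<^sup>2 * (D * \<nu>\<^sup>2 + x\<^sup>2)"
    by (simp add: algebra_simps)
  then have "sqrt (x\<^sup>2 * (D * \<kappa>\<^sup>2 + y\<^sup>2)) < sqrt (y\<^sup>2 * (D * \<nu>\<^sup>2 + x\<^sup>2))"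
    by (rule real_sqrt_less_mono)
  then show ?thesis using assms y by (simp add: real_sqrt_mult)
qed

lemma mult_sqrt_add_mult_sqrt_pos:
  fixes D x y \<nu> \<kappa> :: real
  assumes D: "0 < D" and \<nu>: "0 < \<nu>" and \<kappa>: "0 < \<kappa>" and xy: "0 < \<kappa> * x + \<nu> * y"
  shows "0 < x * sqrt (D * \<kappa>\<^sup>2 + y\<^sup>2) + y * sqrt (D * \<nu>\<^sup>2 + x\<^sup>2)"
proof -
  consider "x < 0" | "y < 0" | "0 \<le> x" "0 \<le> y" by linarith
  then show ?thesis
  proof cases
    case 1
    then show ?thesis using neg_mult_sqrt_less[OF D \<nu> \<kappa> 1 xy] by linarith
  next
    case 2
    have yx: "0 < \<nu> * y + \<kappa> * x" using xy by linarith
    show ?thesis using neg_mult_sqrt_less[OF D \<kappa> \<nu> 2 yx] by linarith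
  next
    case 3
    have "0 < sqrt (D * \<kappa>\<^sup>2 + y\<^sup>2)" "0 < sqrt (D * \<nu>\<^sup>2 + x\<^sup>2)"
      using D \<nu> \<kappa> by (simp_all add: add_pos_nonneg)
    moreover have "0 < x \<or> 0 < y" using 3 xy \<nu> \<kappa> by (auto simp: zero_less_mult_iff)
    ultimately show ?thesis using 3 by (auto simp: add_pos_nonneg add_nonneg_pos)
  qed
qed

lemma one_plus_sq_minus_pos:
  fixes \<rho> x :: real
  assumes "-1 < \<rho>" "\<rho> < 1"
  shows "0 < 1 + x\<^sup>2 - 2 * x * \<rho>"
proof -
  have "1 + x\<^sup>2 - 2 * x * \<rho> = (1 - \<rho>\<^sup>2) + (x - \<rho>)\<^sup>2" by (simp add: power2_eq_square algebra_simps)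
  moreover have "0 \<le> (x - \<rho>)\<^sup>2" by simp
  ultimately show ?thesis using one_minus_sq_pos[OF assms] by linarith
qed

lemma t00_pos_stationary:
  assumes "-1 < \<rho>" "\<rho> < 1"
  shows "0 < t00 \<rho> \<alpha> \<mu>"
    and "(1 + \<mu>\<^sup>2 - 2 * \<mu> * \<rho>) * (t00 \<rho> \<alpha> \<mu>)\<^sup>2 = 1 + \<alpha>\<^sup>2 - 2 * \<alpha> * \<rho>"
  using one_plus_sq_minus_pos[OF assms, of \<alpha>] one_plus_sq_minus_pos[OF assms, of \<mu>]
  by (simp_all add: t00_def)

text \<open>After multiplication by \<open>\<surd>(1 + \<mu>\<^sup>2 - 2\<mu>\<rho>)\<close> both multipliers take the form of
  \<open>mult_sqrt_add_mult_sqrt_pos\<close>, by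
  \<open>1 + a\<^sup>2 - 2a\<rho> = (1 - \<rho>\<^sup>2) + (a - \<rho>)\<^sup>2 = (1 - \<rho>\<^sup>2) a\<^sup>2 + (1 - \<rho>a)\<^sup>2\<close>.\<close>
lemma t00_multipliers_pos:
  assumes r: "-1 < \<rho>" "\<rho> < 1" and a: "0 < \<alpha>" "0 < \<mu>"
    and h1: "2 * \<rho> < \<alpha> + \<mu>" and h2: "2 * \<alpha> * \<mu> * \<rho> < \<alpha> + \<mu>"
  defines "T \<equiv> t00 \<rho> \<alpha> \<mu>"
  shows "0 < (1 + T) - \<rho> * (\<alpha> + \<mu> * T)" and "0 < (\<alpha> + \<mu> * T) - \<rho> * (1 + T)"
proof -
  define D where "D = 1 - \<rho>\<^sup>2"
  define A where "A = 1 + \<alpha>\<^sup>2 - 2 * \<alpha> * \<rho>"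
  define C where "C = 1 + \<mu>\<^sup>2 - 2 * \<mu> * \<rho>"
  have D: "0 < D" unfolding D_def by (rule one_minus_sq_pos[OF r])
  have C: "0 < sqrt C" unfolding C_def using one_plus_sq_minus_pos[OF r] by simp
  have A_eq: "A = D * 1\<^sup>2 + (\<alpha> - \<rho>)\<^sup>2" "A = D * \<alpha>\<^sup>2 + (1 - \<rho> * \<alpha>)\<^sup>2"
    and C_eq: "C = D * 1\<^sup>2 + (\<mu> - \<rho>)\<^sup>2" "C = D * \<mu>\<^sup>2 + (1 - \<rho> * \<mu>)\<^sup>2"
    by (simp_all add: A_def C_def D_def power2_eq_square algebra_simps)
  have sqrt_T: "sqrt C * T = sqrt A"
    using C by (simp add: T_def t00_def A_def C_def real_sqrt_divide)
  have "sqrt C * ((1 + T) - \<rho> * (\<alpha> + \<mu> * T)) = (1 - \<rho> * \<alpha>) * sqrt C + (1 - \<rho> * \<mu>) * sqrt A"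
    unfolding sqrt_T[symmetric] by (simp add: algebra_simps)
  also have "\<dots> > 0"
    unfolding A_eq(2) C_eq(2)
    by (rule mult_sqrt_add_mult_sqrt_pos[OF D a]) (use h2 in \<open>simp add: algebra_simps\<close>)
  finally show "0 < (1 + T) - \<rho> * (\<alpha> + \<mu> * T)" using C by (simp add: zero_less_mult_iff)
  have "sqrt C * ((\<alpha> + \<mu> * T) - \<rho> * (1 + T)) = (\<alpha> - \<rho>) * sqrt C + (\<mu> - \<rho>) * sqrt A"
    unfolding sqrt_T[symmetric] by (simp add: algebra_simps)
  also have "\<dots> > 0"
    unfolding A_eq(1) C_eq(1)
    by (rule mult_sqrt_add_mult_sqrt_pos[OF D zero_less_one zero_less_one]) (use h1 in simp)
  finally show "0 < (\<alpha> + \<mu> * T) - \<rho> * (1 + T)" using C by (simp add: zero_less_mult_iff)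
qed

lemma sq_add_linear_ge_min:
  fixes w d c :: real
  assumes "0 \<le> w" "0 < c"
  shows "min (d\<^sup>2 / 4) (c * \<bar>d\<bar>) \<le> (w + d)\<^sup>2 + 2 * c * w"
proof (cases "\<bar>d\<bar> / 2 \<le> w")
  case True
  then have "c * \<bar>d\<bar> \<le> 2 * c * w" using assms by (simp add: mult_left_mono[of "\<bar>d\<bar>" "2 * w" c] mult_ac)
  moreover have "0 \<le> (w + d)\<^sup>2" by simp
  ultimately show ?thesis by linarith
next
  case False
  then have "\<bar>d\<bar> / 2 \<le> \<bar>w + d\<bar>" using assms by linarith
  then have "(\<bar>d\<bar> / 2)\<^sup>2 \<le> \<bar>w + d\<bar>\<^sup>2" by (intro power_mono) auto
  then have "d\<^sup>2 / 4 \<le> (w + d)\<^sup>2" by (simp add: power_divide)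
  moreover have "0 \<le> 2 * c * w" using assms by simp
  ultimately show ?thesis by linarith
qed

text \<open>The stationarity hypothesis says that \<open>T\<close> minimises \<open>g\<^sub>0\<close>. With \<open>p = b(T)\<close> and
  \<open>v = \<Sigma>\<^sup>-\<^sup>1 p\<close>, every \<open>x \<ge> b(s)\<close> satisfies
  \<open>x\<^sup>T\<Sigma>\<^sup>-\<^sup>1x \<ge> p\<^sup>T\<Sigma>\<^sup>-\<^sup>1p + 2 v\<^sup>T(x - p) \<ge> s g\<^sub>0(T)\<close>, and the remainder
  \<open>(x - p)\<^sup>T\<Sigma>\<^sup>-\<^sup>1(x - p)\<close> is bounded away from zero when \<open>s \<noteq> T\<close>.\<close>
lemma gfun_gt_at_stationary:
  assumes r: "-1 < \<rho>" "\<rho> < 1" and T: "0 < T" and s: "0 < s" "s \<noteq> T"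
    and pos1: "0 < (1 + T) - \<rho> * (\<alpha> + \<mu> * T)" and pos2: "0 \<le> (\<alpha> + \<mu> * T) - \<rho> * (1 + T)"
    and stationary: "(1 + \<mu>\<^sup>2 - 2 * \<mu> * \<rho>) * T\<^sup>2 = 1 + \<alpha>\<^sup>2 - 2 * \<alpha> * \<rho>"
  shows "qform \<rho> (1 + T) (\<alpha> + \<mu> * T) / T < gfun \<rho> \<alpha> \<mu> s"
proof -
  define D where "D = 1 - \<rho>\<^sup>2"
  define v1 v2 where "v1 = (1 + T) - \<rho> * (\<alpha> + \<mu> * T)" and "v2 = (\<alpha> + \<mu> * T) - \<rho> * (1 + T)"
  define G where "G = 2 * (v1 + \<mu> * v2) / D"
  have D: "0 < D" unfolding D_def by (rule one_minus_sq_pos[OF r])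
  have "(1 + T)\<^sup>2 - 2 * \<rho> * (1 + T) * (\<alpha> + \<mu> * T) + (\<alpha> + \<mu> * T)\<^sup>2 - 2 * T * (v1 + \<mu> * v2)
      = (1 + \<alpha>\<^sup>2 - 2 * \<alpha> * \<rho>) - (1 + \<mu>\<^sup>2 - 2 * \<mu> * \<rho>) * T\<^sup>2"
    by (simp add: v1_def v2_def power2_eq_square algebra_simps)
  then have qform_T: "qform \<rho> (1 + T) (\<alpha> + \<mu> * T) = T * G"
    using stationary by (simp add: qform_def G_def D_def)
  define \<delta> where "\<delta> = min ((s - T)\<^sup>2 / 4) (v1 / D * \<bar>s - T\<bar>)"
  have \<delta>: "0 < \<delta>" using s pos1 D by (simp add: \<delta>_def v1_def)
  have "s * G + \<delta> \<le> qf (Sig \<rho>) x" if "feasible (bvec \<alpha> \<mu> s) x" for x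
  proof -
    define w1 w2 where "w1 = x $ 1 - (1 + s)" and "w2 = x $ 2 - (\<alpha> + \<mu> * s)"
    have w: "0 \<le> w1" "0 \<le> w2" using that by (simp_all add: feasible_2[where i=1 and j=2] w1_def w2_def)
    have "qf (Sig \<rho>) x = qform \<rho> ((1 + T) + (w1 + (s - T))) ((\<alpha> + \<mu> * T) + (w2 + \<mu> * (s - T)))"
      by (simp add: qf_Sig[OF r, where i=1 and j=2] w1_def w2_def algebra_simps)
    also have "\<dots> = T * G + 2 * (v1 * (w1 + (s - T)) + v2 * (w2 + \<mu> * (s - T))) / D
        + qform \<rho> (w1 + (s - T)) (w2 + \<mu> * (s - T))"
      by (subst qform_add) (simp add: qform_T v1_def v2_def D_def)
    also have "2 * (v1 * (w1 + (s - T)) + v2 * (w2 + \<mu> * (s - T))) / D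
        = (s - T) * G + 2 * (v1 / D) * w1 + 2 * v2 * w2 / D"
      using D by (simp add: G_def field_simps)
    finally have x: "qf (Sig \<rho>) x = s * G + (2 * (v1 / D) * w1 + 2 * v2 * w2 / D
        + qform \<rho> (w1 + (s - T)) (w2 + \<mu> * (s - T)))"
      by (simp add: algebra_simps)
    have "(w1 + (s - T))\<^sup>2 \<le> qform \<rho> (w1 + (s - T)) (w2 + \<mu> * (s - T))"
      by (subst qform_commute) (rule qform_ge_sq[OF r])
    moreover have "\<delta> \<le> (w1 + (s - T))\<^sup>2 + 2 * (v1 / D) * w1"
      unfolding \<delta>_def using w pos1 D by (intro sq_add_linear_ge_min) (simp_all add: v1_def)
    moreover have "0 \<le> 2 * v2 * w2 / D" using pos2 w D by (simp add: v2_def)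
    ultimately show ?thesis unfolding x by linarith
  qed
  then have "(s * G + \<delta>) / s \<le> gfun \<rho> \<alpha> \<mu> s" by (rule gfun_lower_bound[OF s(1)])
  moreover have "(s * G + \<delta>) / s = G + \<delta> / s" using s by (simp add: field_simps)
  moreover have "0 < \<delta> / s" using \<delta> s by simp
  ultimately show ?thesis using qform_T T by simp
qed

lemma g0_eq_qform:
  assumes "-1 < \<rho>" "\<rho> < 1" "t \<noteq> 0"
  shows "g0 \<rho> \<alpha> \<mu> t = qform \<rho> (1 + t) (\<alpha> + \<mu> * t) / t"
proof -
  define D where "D = 1 - \<rho>\<^sup>2"
  have D: "D \<noteq> 0" using one_minus_sq_pos[OF assms(1,2)] by (simp add: D_def)
  have "g0 \<rho> \<alpha> \<mu> t = ((1 + \<alpha>\<^sup>2 - 2*\<alpha>*\<rho>) + 2 * (1 + \<alpha>*\<mu> - \<rho>*\<alpha> - \<rho>*\<mu>) * t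
      + (1 + \<mu>\<^sup>2 - 2*\<rho>*\<mu>) * t\<^sup>2) / D / t"
    unfolding g0_def D_def[symmetric] using D assms(3) by (simp add: field_simps power2_eq_square)
  also have "\<dots> = qform \<rho> (1 + t) (\<alpha> + \<mu> * t) / t"
    unfolding qform_def D_def[symmetric] by (simp add: power2_eq_square algebra_simps)
  finally show ?thesis .
qed

lemma deriv_deriv_hyperbola:
  fixes f :: "real \<Rightarrow> real"
  assumes f: "\<And>s. 0 < s \<Longrightarrow> f s = A / s + B + C * s" and t: "0 < t"
  shows "deriv (deriv f) t = 2 * A / t ^ 3"
proof -
  have deriv_f: "deriv f s = - A / s\<^sup>2 + C" if s: "0 < s" for s
  proof -
    have "((\<lambda>s. A / s + B + C * s) has_field_derivative (- A / s\<^sup>2 + C)) (at s)"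
      using s by (auto intro!: derivative_eq_intros simp: power2_eq_square field_simps)
    then have "(f has_field_derivative (- A / s\<^sup>2 + C)) (at s)"
      by (rule has_field_derivative_transform_within_open[where S="{0<..}"]) (use s f in auto)
    then show ?thesis by (rule DERIV_imp_deriv)
  qed
  have "((\<lambda>s. - A / s\<^sup>2 + C) has_field_derivative (2 * A / t ^ 3)) (at t)"
    using t by (auto intro!: derivative_eq_intros simp: power2_eq_square field_simps eval_nat_numeral)
  then have "(deriv f has_field_derivative (2 * A / t ^ 3)) (at t)"
    by (rule has_field_derivative_transform_within_open[where S="{0<..}"]) (use t deriv_f in auto)
  then show ?thesis by (rule DERIV_imp_deriv)
qed

lemma case_I_eq_12:
  assumes r: "-1 < \<rho>" "\<rho> < 1" and a: "0 < \<alpha>" "0 < \<mu>"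
    and \<rho>: "\<rho> < (\<alpha> + \<mu>) / 2" "\<rho> < (\<alpha> + \<mu>) / (2 * \<alpha> * \<mu>)"
  shows "t0 \<rho> \<alpha> \<mu> = t00 \<rho> \<alpha> \<mu> \<and> Iset \<rho> \<alpha> \<mu> = {1, 2} \<and> Kset \<rho> \<alpha> \<mu> = {} \<and>
    ghat \<rho> \<alpha> \<mu> = g0 \<rho> \<alpha> \<mu> (t00 \<rho> \<alpha> \<mu>) \<and>
    gtilde \<rho> \<alpha> \<mu> = deriv (deriv (g0 \<rho> \<alpha> \<mu>)) (t00 \<rho> \<alpha> \<mu>)"
proof -
  define T where "T = t00 \<rho> \<alpha> \<mu>"
  define D where "D = 1 - \<rho>\<^sup>2"
  let ?b = "bvec \<alpha> \<mu> T"
  have T: "0 < T" and stationary: "(1 + \<mu>\<^sup>2 - 2 * \<mu> * \<rho>) * T\<^sup>2 = 1 + \<alpha>\<^sup>2 - 2 * \<alpha> * \<rho>"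
    using t00_pos_stationary[OF r] by (simp_all add: T_def)
  have h1: "2 * \<rho> < \<alpha> + \<mu>" and h2: "2 * \<alpha> * \<mu> * \<rho> < \<alpha> + \<mu>"
    using \<rho> a by (simp_all add: field_simps)
  note v = t00_multipliers_pos[OF r a h1 h2, folded T_def]
  have D: "0 < D" unfolding D_def by (rule one_minus_sq_pos[OF r])
  have pos: "0 < (matrix_inv (Sig \<rho>) *v ?b) $ i" for i
    using v D exhaust_2[of i]
    by (auto simp: matrix_inv_Sig_mult[OF r, where i=1 and j=2]
        matrix_inv_Sig_mult[OF r, where i=2 and j=1] D_def[symmetric])
  have g_T: "gfun \<rho> \<alpha> \<mu> T = g0 \<rho> \<alpha> \<mu> T"
    using gfun_eq[OF strict_minimiser_interior[OF r pos]] T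
    by (simp add: g0_eq_qform[OF r] qf_Sig[OF r, where i=1 and j=2])
  have t0: "t0 \<rho> \<alpha> \<mu> = T"
  proof (rule t0_eqI[OF T])
    show "gfun \<rho> \<alpha> \<mu> T < gfun \<rho> \<alpha> \<mu> s" if "0 < s" "s \<noteq> T" for s
      using gfun_gt_at_stationary[OF r T that v(1) less_imp_le[OF v(2)] stationary] g_T T
      by (simp add: g0_eq_qform[OF r])
  qed
  have I: "Iset \<rho> \<alpha> \<mu> = UNIV" by (simp add: Iset_def t0 ess_Sig_interior[OF r pos])
  have "deriv (deriv (g0 \<rho> \<alpha> \<mu>)) T = 2 * ((1 + \<alpha>\<^sup>2 - 2 * \<alpha> * \<rho>) / D) / T ^ 3"
    by (rule deriv_deriv_hyperbola[OF _ T, where B = "2 * (1 + \<alpha>*\<mu> - \<rho>*\<alpha> - \<rho>*\<mu>) / D"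
          and C = "(1 + \<mu>\<^sup>2 - 2*\<rho>*\<mu>) / D"]) (simp add: g0_def D_def)
  also have "\<dots> = 2 / T ^ 3 * ((1 - \<rho> * \<alpha>) / D + \<alpha> * ((\<alpha> - \<rho>) / D))"
    using D T by (simp add: field_simps power2_eq_square)
  also have "\<dots> = gtilde \<rho> \<alpha> \<mu>"
    by (simp add: gtilde_def I t0 sum_2 subinv_def matrix_inv_Sig_mult[OF r, where i=1 and j=2]
        matrix_inv_Sig_mult[OF r, where i=2 and j=1] D_def)
  finally show ?thesis
    using t0 I g_T by (simp add: Kset_def Iset_def weak_ess_UNIV ghat_def UNIV_2 T_def)
qed

lemma t00_at_threshold_1:
  assumes r: "-1 < \<rho>" "\<rho> < 1" and \<rho>: "\<rho> = (\<alpha> + \<mu>) / 2"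
  shows "t00 \<rho> \<alpha> \<mu> = 1" and "g0 \<rho> \<alpha> \<mu> 1 = 4"
proof -
  have "1 + \<alpha>\<^sup>2 - 2 * \<alpha> * \<rho> = 1 + \<mu>\<^sup>2 - 2 * \<mu> * \<rho>"
    using \<rho> by (simp add: power2_eq_square algebra_simps)
  then show "t00 \<rho> \<alpha> \<mu> = 1"
    using one_plus_sq_minus_pos[OF r, of \<mu>] by (simp add: t00_def)
  have "qform \<rho> 2 (\<alpha> + \<mu>) = 4"
    using \<rho> by (subst qform_commute) (simp add: qform_eq_sq_plus[OF r])
  then show "g0 \<rho> \<alpha> \<mu> 1 = 4" by (simp add: g0_eq_qform[OF r] one_add_one)
qed

lemma t00_at_threshold_2:
  assumes r: "-1 < \<rho>" "\<rho> < 1" and a: "0 < \<alpha>" "0 < \<mu>"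
    and \<rho>: "\<rho> = (\<alpha> + \<mu>) / (2 * \<alpha> * \<mu>)"
  shows "t00 \<rho> \<alpha> \<mu> = \<alpha> / \<mu>" and "g0 \<rho> \<alpha> \<mu> (\<alpha> / \<mu>) = 4 * \<alpha> * \<mu>"
proof -
  have e: "2 * \<alpha> * \<mu> * \<rho> = \<alpha> + \<mu>" using \<rho> a by simp
  have "(1 + \<alpha>\<^sup>2 - 2 * \<alpha> * \<rho>) * \<mu>\<^sup>2 = \<alpha>\<^sup>2 * \<mu>\<^sup>2 - \<alpha> * \<mu>"
    and "(1 + \<mu>\<^sup>2 - 2 * \<mu> * \<rho>) * \<alpha>\<^sup>2 = \<alpha>\<^sup>2 * \<mu>\<^sup>2 - \<alpha> * \<mu>"
    using e by algebra+
  then have "(1 + \<alpha>\<^sup>2 - 2 * \<alpha> * \<rho>) / (1 + \<mu>\<^sup>2 - 2 * \<mu> * \<rho>) = (\<alpha> / \<mu>)\<^sup>2"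
    using a one_plus_sq_minus_pos[OF r, of \<mu>] by (simp add: field_simps)
  then show "t00 \<rho> \<alpha> \<mu> = \<alpha> / \<mu>" using a by (simp add: t00_def)
  have "1 + \<alpha> / \<mu> = \<rho> * (2 * \<alpha>)" using e a by (simp add: field_simps)
  then have "qform \<rho> (1 + \<alpha> / \<mu>) (\<alpha> + \<mu> * (\<alpha> / \<mu>)) = 4 * \<alpha>\<^sup>2"
    using a by (simp add: qform_eq_sq_plus[OF r] power2_eq_square)
  then show "g0 \<rho> \<alpha> \<mu> (\<alpha> / \<mu>) = 4 * \<alpha> * \<mu>"
    using a by (simp add: g0_eq_qform[OF r] power2_eq_square)
qed

lemma g1_at_t01: "g1 t01 = 4" "deriv (deriv g1) t01 = 2"
proof -
  show "g1 t01 = 4" by (simp add: g1_def t01_def)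
  have "deriv (deriv g1) 1 = 2 * 1 / 1 ^ 3"
    by (rule deriv_deriv_hyperbola[where B = 2 and C = 1]) (auto simp: g1_def field_simps power2_eq_square)
  then show "deriv (deriv g1) t01 = 2" by (simp add: t01_def)
qed

lemma g2_at_t02:
  assumes "0 < \<alpha>" "0 < \<mu>"
  shows "g2 \<alpha> \<mu> (t02 \<alpha> \<mu>) = 4 * \<alpha> * \<mu>" "deriv (deriv (g2 \<alpha> \<mu>)) (t02 \<alpha> \<mu>) = 2 * \<mu> ^ 3 / \<alpha>"
proof -
  show "g2 \<alpha> \<mu> (t02 \<alpha> \<mu>) = 4 * \<alpha> * \<mu>"
    using assms by (simp add: g2_def t02_def field_simps power2_eq_square)
  have "deriv (deriv (g2 \<alpha> \<mu>)) (\<alpha> / \<mu>) = 2 * \<alpha>\<^sup>2 / (\<alpha> / \<mu>) ^ 3"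
    by (rule deriv_deriv_hyperbola[where B = "2 * \<alpha> * \<mu>" and C = "\<mu>\<^sup>2"])
      (use assms in \<open>auto simp: g2_def field_simps power2_eq_square\<close>)
  also have "\<dots> = 2 * \<mu> ^ 3 / \<alpha>" using assms by (simp add: field_simps power2_eq_square power3_eq_cube)
  finally show "deriv (deriv (g2 \<alpha> \<mu>)) (t02 \<alpha> \<mu>) = 2 * \<mu> ^ 3 / \<alpha>" by (simp add: t02_def)
qed

lemma thresholds_le_of_mult_le_1:
  fixes \<alpha> \<mu> :: real
  assumes "0 < \<alpha>" "0 < \<mu>" "\<alpha> * \<mu> \<le> 1"
  shows "(\<alpha> + \<mu>) / 2 \<le> (\<alpha> + \<mu>) / (2 * \<alpha> * \<mu>)"
  using assms by (intro divide_left_mono) auto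

lemma thresholds_ge_of_mult_ge_1:
  fixes \<alpha> \<mu> :: real
  assumes "0 < \<alpha>" "0 < \<mu>" "1 \<le> \<alpha> * \<mu>"
  shows "(\<alpha> + \<mu>) / (2 * \<alpha> * \<mu>) \<le> (\<alpha> + \<mu>) / 2"
  using assms by (intro divide_left_mono) auto

theorem corollary6p3:
  fixes \<rho> \<alpha> \<mu> :: real
  assumes "-1 < \<rho>" "\<rho> < 1" "0 < \<alpha>" "0 < \<mu>"
  shows
   "(((\<mu> < 1 \<and> \<alpha> < 1) \<or> (\<mu> < 1 \<and> \<alpha> \<ge> 1 \<and> \<mu> \<le> 1/\<alpha>) \<or> (\<mu> \<ge> 1 \<and> \<alpha> < 1 \<and> \<mu> \<le> 1/\<alpha>)) \<longrightarrow>
      ((\<rho> < (\<alpha> + \<mu>) / 2 \<longrightarrow>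
          t0 \<rho> \<alpha> \<mu> = t00 \<rho> \<alpha> \<mu> \<and> Iset \<rho> \<alpha> \<mu> = {1, 2} \<and> Kset \<rho> \<alpha> \<mu> = {} \<and>
          ghat \<rho> \<alpha> \<mu> = g0 \<rho> \<alpha> \<mu> (t00 \<rho> \<alpha> \<mu>) \<and>
          gtilde \<rho> \<alpha> \<mu> = deriv (deriv (g0 \<rho> \<alpha> \<mu>)) (t00 \<rho> \<alpha> \<mu>)) \<and>
       (\<rho> = (\<alpha> + \<mu>) / 2 \<longrightarrow>
          t0 \<rho> \<alpha> \<mu> = t00 \<rho> \<alpha> \<mu> \<and> t00 \<rho> \<alpha> \<mu> = t01 \<and> Iset \<rho> \<alpha> \<mu> = {1} \<and> Kset \<rho> \<alpha> \<mu> = {2} \<and>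
          ghat \<rho> \<alpha> \<mu> = g0 \<rho> \<alpha> \<mu> (t00 \<rho> \<alpha> \<mu>) \<and> g0 \<rho> \<alpha> \<mu> (t00 \<rho> \<alpha> \<mu>) = g1 t01 \<and> g1 t01 = 4 \<and>
          gtilde \<rho> \<alpha> \<mu> = deriv (deriv g1) t01 \<and> deriv (deriv g1) t01 = 2) \<and>
       ((\<alpha> + \<mu>) / 2 < \<rho> \<longrightarrow>
          t0 \<rho> \<alpha> \<mu> = t01 \<and> Iset \<rho> \<alpha> \<mu> = {1} \<and> Kset \<rho> \<alpha> \<mu> = {} \<and>
          ghat \<rho> \<alpha> \<mu> = g1 t01 \<and> g1 t01 = 4 \<and>
          gtilde \<rho> \<alpha> \<mu> = deriv (deriv g1) t01 \<and> deriv (deriv g1) t01 = 2))) \<and>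
    (((\<mu> \<ge> 1 \<and> \<alpha> \<ge> 1) \<or> (\<mu> < 1 \<and> \<alpha> \<ge> 1 \<and> \<mu> > 1/\<alpha>) \<or> (\<mu> \<ge> 1 \<and> \<alpha> < 1 \<and> \<mu> > 1/\<alpha>)) \<longrightarrow>
      ((\<rho> < (\<alpha> + \<mu>) / (2 * \<alpha> * \<mu>) \<longrightarrow>
          t0 \<rho> \<alpha> \<mu> = t00 \<rho> \<alpha> \<mu> \<and> Iset \<rho> \<alpha> \<mu> = {1, 2} \<and> Kset \<rho> \<alpha> \<mu> = {} \<and>
          ghat \<rho> \<alpha> \<mu> = g0 \<rho> \<alpha> \<mu> (t00 \<rho> \<alpha> \<mu>) \<and>
          gtilde \<rho> \<alpha> \<mu> = deriv (deriv (g0 \<rho> \<alpha> \<mu>)) (t00 \<rho> \<alpha> \<mu>)) \<and>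
       (\<rho> = (\<alpha> + \<mu>) / (2 * \<alpha> * \<mu>) \<longrightarrow>
          t0 \<rho> \<alpha> \<mu> = t00 \<rho> \<alpha> \<mu> \<and> t00 \<rho> \<alpha> \<mu> = t02 \<alpha> \<mu> \<and> Iset \<rho> \<alpha> \<mu> = {2} \<and> Kset \<rho> \<alpha> \<mu> = {1} \<and>
          ghat \<rho> \<alpha> \<mu> = g0 \<rho> \<alpha> \<mu> (t00 \<rho> \<alpha> \<mu>) \<and> g0 \<rho> \<alpha> \<mu> (t00 \<rho> \<alpha> \<mu>) = g2 \<alpha> \<mu> (t02 \<alpha> \<mu>) \<and>
          g2 \<alpha> \<mu> (t02 \<alpha> \<mu>) = 4 * \<alpha> * \<mu> \<and>
          gtilde \<rho> \<alpha> \<mu> = deriv (deriv (g2 \<alpha> \<mu>)) (t02 \<alpha> \<mu>) \<and>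
          deriv (deriv (g2 \<alpha> \<mu>)) (t02 \<alpha> \<mu>) = 2 * \<mu> ^ 3 / \<alpha>) \<and>
       ((\<alpha> + \<mu>) / (2 * \<alpha> * \<mu>) < \<rho> \<longrightarrow>
          t0 \<rho> \<alpha> \<mu> = t02 \<alpha> \<mu> \<and> Iset \<rho> \<alpha> \<mu> = {2} \<and> Kset \<rho> \<alpha> \<mu> = {} \<and>
          ghat \<rho> \<alpha> \<mu> = g2 \<alpha> \<mu> (t02 \<alpha> \<mu>) \<and> g2 \<alpha> \<mu> (t02 \<alpha> \<mu>) = 4 * \<alpha> * \<mu> \<and>
          gtilde \<rho> \<alpha> \<mu> = deriv (deriv (g2 \<alpha> \<mu>)) (t02 \<alpha> \<mu>) \<and>
          deriv (deriv (g2 \<alpha> \<mu>)) (t02 \<alpha> \<mu>) = 2 * \<mu> ^ 3 / \<alpha>)))"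
proof -
  note r = assms(1,2) and a = assms(3,4)
  show ?thesis (is "(?region_i \<longrightarrow> ?claims_i) \<and> (?region_ii \<longrightarrow> ?claims_ii)")
  proof (rule conjI; rule impI)
    assume ?region_i
    then have "\<alpha> * \<mu> \<le> 1"
      using a by (elim disjE) (auto simp: pos_le_divide_eq mult.commute intro: mult_le_one)
    then have thresholds: "(\<alpha> + \<mu>) / 2 \<le> (\<alpha> + \<mu>) / (2 * \<alpha> * \<mu>)"
      by (rule thresholds_le_of_mult_le_1[OF a])
    show ?claims_i (is "(?below \<longrightarrow> ?X1) \<and> (?at \<longrightarrow> ?X2) \<and> (?above \<longrightarrow> ?X3)")
    proof -
      have ?X1 if ?below
        using case_I_eq_12[OF r a that order.strict_trans2[OF that thresholds]] .
      moreover have ?X2 if ?at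
        using case_I_eq_1[OF r a] t00_at_threshold_1[OF r that] g1_at_t01 by (simp add: that t01_def)
      moreover have ?X3 if ?above
        using case_I_eq_1[OF r a] g1_at_t01 that by (simp add: t01_def)
      ultimately show ?thesis by blast
    qed
  next
    assume ?region_ii
    then have "1 \<le> \<alpha> * \<mu>"
      using a mult_mono[of 1 \<alpha> 1 \<mu>] by (elim disjE) (auto simp: pos_divide_less_eq mult.commute)
    then have thresholds: "(\<alpha> + \<mu>) / (2 * \<alpha> * \<mu>) \<le> (\<alpha> + \<mu>) / 2"
      by (rule thresholds_ge_of_mult_ge_1[OF a])
    show ?claims_ii (is "(?below \<longrightarrow> ?X1) \<and> (?at \<longrightarrow> ?X2) \<and> (?above \<longrightarrow> ?X3)")
    proof -
      have ?X1 if ?below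
        using case_I_eq_12[OF r a order.strict_trans2[OF that thresholds] that] .
      moreover have ?X2 if ?at
        using case_I_eq_2[OF r a] t00_at_threshold_2[OF r a that] g2_at_t02[OF a] that
        by (simp add: t02_def)
      moreover have ?X3 if ?above
        using case_I_eq_2[OF r a] g2_at_t02[OF a] that by (simp add: t02_def)
      ultimately show ?thesis by blast
    qed
  qed
qed

end
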